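(* Let $\lambda=(\lambda_1,\lambda_2)\in\mathbb{C}^2$ with $\sigma:=\lambda_1-\lambda_2\notin\mathbb{N}$, and let $\mu\in\mathbb{C}$. Let $M_\lambda$ be the Verma $gl(2)$-module with highest weight vector $v_\lambda$, and let $\widetilde M$ be the $gl(2)$-module of formal series described in the context. Put $$u_\lambda=\sum_{i=0}^{\infty}\frac{(-1)^i\langle\mu\rangle_i}{i!\,\langle\sigma\rangle_i}\,E_{2,1}^i v_\lambda\; x_1^{i+\mu}x_2^{-i+\mu}\in\widetilde M .$$ Then $u_\lambda$ is annihilated by $E_{1,2}$ and has weight $\lambda$, so there is a unique $gl(2)$-module homomorphism $\Phi:M_\lambda\to\widetilde M$ with $\Phi(v_\lambda)=u_\lambda$, and its Etingof trace function is $$E(z_1,z_2)=\frac{z_1^{\lambda_1+1}z_2^{\lambda_2}}{z_1-z_2}\;{}_2F_1\!\left(\mu+1,-\mu;\lambda_2-\lambda_1;\frac{z_2}{z_2-z_1}\right),$$ where the right-hand side is expanded as $z_1^{\lambda_1}z_2^{\lambda_2}$ times a power series in $z_2/z_1$ (i.e. in the region $|z_2|<|z_1|$).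
   Context: $gl(2)$ has basis $E_{i,j}$ (matrix units), $i,j\in\{1,2\}$. For $c\in\mathbb{C}$, $i\in\mathbb{N}$: $(c)_i=c(c+1)\cdots(c+i-1)$ and $\langle c\rangle_i=c(c-1)\cdots(c-i+1)$, with $(c)_0=\langle c\rangle_0=1$. ${}_2F_1(a,b;c;z)=\sum_{m\ge0}\frac{(a)_m(b)_m}{m!(c)_m}z^m$ for $-c\notin\mathbb{N}$. The Verma module $M_\lambda$ has basis $E_{2,1}^iv_\lambda$ ($i\in\mathbb{N}$) with $E_{1,2}v_\lambda=0$, $E_{k,k}v_\lambda=\lambda_kv_\lambda$. $\widetilde M$ is the space of formal series $\sum_{i_1,i_2\in\mathbb{Z}}v_{i_1,i_2}x_1^{i_1+\mu}x_2^{i_2+\mu}$ with $v_{i_1,i_2}\in M_\lambda$ arbitrary, on which $E_{j_1,j_2}$ acts by $E_{j_1,j_2}(v\,x^{m})=E_{j_1,j_2}(v)\,x^m+v\,(x_{j_1}\partial_{x_{j_2}}-\mu\delta_{j_1,j_2})(x^m)$. Writing $\Phi(w)=(x_1x_2)^{\mu}\sum_{\vec k\in\mathbb{Z}^2}\Phi_{\vec k}(w)x_1^{k_1}x_2^{k_2}$ with $\Phi_{\vec k}\in\mathrm{End}(M_\lambda)$, the Etingof trace function is $E(z_1,z_2)=(x_1x_2)^{-\mu}\mathrm{tr}_{M_\lambda}\Phi z_1^{E_{1,1}}z_2^{E_{2,2}}:=\sum_{\nu}\mathrm{tr}(\Phi_{\vec 0}|_{M_\lambda[\nu]})\,z_1^{\nu_1}z_2^{\nu_2}$,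 the sum over weights $\nu$ of $M_\lambda$, where $M_\lambda[\nu]$ is the (finite-dimensional) weight space on which $E_{k,k}$ acts by $\nu_k$. *)

theory Defs
  imports "HOL-Computational_Algebra.Computational_Algebra"
begin

text \<open>Falling factorial  <c>_i = c(c-1)...(c-i+1).  The rising factorial (c)_i is the
library's pochhammer.\<close>
definition falling :: "complex \<Rightarrow> nat \<Rightarrow> complex" where
  "falling c i = (\<Prod>k<i. c - of_nat k)"

definition hyp2F1_fps :: "complex \<Rightarrow> complex \<Rightarrow> complex \<Rightarrow> complex fps" where
  "hyp2F1_fps a b c =
     Abs_fps (\<lambda>m. pochhammer a m * pochhammer b m / (fact m * pochhammer c m))"

text \<open>Model of the Verma module M_lambda: the element  sum_i c_i E21^i v_lambda  is
the polynomial  sum_i c_i X^i  (M_lambda = C[E21] v_lambda as a vector space).\<close>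
definition diag_op :: "(nat \<Rightarrow> complex) \<Rightarrow> complex poly \<Rightarrow> complex poly" where
  "diag_op g p = (\<Sum>i\<le>degree p. monom (g i * coeff p i) i)"

definition lower_op :: "(nat \<Rightarrow> complex) \<Rightarrow> complex poly \<Rightarrow> complex poly" where
  "lower_op g p = (\<Sum>i\<in>{1..degree p}. monom (g i * coeff p i) (i - 1))"

text \<open>Action of E_{j1,j2} (j1,j2 in {1,2}) on M_lambda, lambda = (l1,l2):
  E11 E21^i v = (l1 - i) E21^i v,  E22 E21^i v = (l2 + i) E21^i v,
  E21 E21^i v = E21^(i+1) v,       E12 E21^i v = i (l1 - l2 - i + 1) E21^(i-1) v.\<close>
definition verma_act :: "complex \<Rightarrow> complex \<Rightarrow> nat \<Rightarrow> nat \<Rightarrow> complex poly \<Rightarrow> complex poly" where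
  "verma_act l1 l2 j1 j2 p =
     (if j1 = 1 \<and> j2 = 1 then diag_op (\<lambda>i. l1 - of_nat i) p
      else if j1 = 2 \<and> j2 = 2 then diag_op (\<lambda>i. l2 + of_nat i) p
      else if j1 = 2 \<and> j2 = 1 then p * [:0, 1:]
      else if j1 = 1 \<and> j2 = 2 then lower_op (\<lambda>i. of_nat i * (l1 - l2 - of_nat i + 1)) p
      else 0)"

text \<open>The module M~ of formal series  sum_{(i1,i2)} F(i1,i2) x1^(i1+mu) x2^(i2+mu),
F(i1,i2) in M_lambda arbitrary, with
  E_{j1,j2}(v x^m) = E_{j1,j2}(v) x^m + v (x_{j1} d/dx_{j2} - mu delta_{j1 j2}) x^m,
written out coefficientwise.\<close>
definition Mt_act :: "complex \<Rightarrow> complex \<Rightarrow> complex \<Rightarrow> nat \<Rightarrow> nat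
      \<Rightarrow> (int \<times> int \<Rightarrow> complex poly) \<Rightarrow> (int \<times> int \<Rightarrow> complex poly)" where
  "Mt_act l1 l2 \<mu> j1 j2 F = (\<lambda>(i1, i2).
     verma_act l1 l2 j1 j2 (F (i1, i2)) +
     (if j1 = 1 \<and> j2 = 1 then smult (of_int i1) (F (i1, i2))
      else if j1 = 2 \<and> j2 = 2 then smult (of_int i2) (F (i1, i2))
      else if j1 = 1 \<and> j2 = 2 then smult (of_int i2 + 1 + \<mu>) (F (i1 - 1, i2 + 1))
      else if j1 = 2 \<and> j2 = 1 then smult (of_int i1 + 1 + \<mu>) (F (i1 + 1, i2 - 1))
      else 0))"

definition is_gl2_hom :: "complex \<Rightarrow> complex \<Rightarrow> complex
      \<Rightarrow> (complex poly \<Rightarrow> (int \<times> int \<Rightarrow> complex poly)) \<Rightarrow> bool" where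
  "is_gl2_hom l1 l2 \<mu> \<Phi> \<longleftrightarrow>
     (\<forall>p q. \<Phi> (p + q) = (\<lambda>k. \<Phi> p k + \<Phi> q k)) \<and>
     (\<forall>c p. \<Phi> (smult c p) = (\<lambda>k. smult c (\<Phi> p k))) \<and>
     (\<forall>j1\<in>{1,2}. \<forall>j2\<in>{1,2}. \<forall>p.
        \<Phi> (verma_act l1 l2 j1 j2 p) = Mt_act l1 l2 \<mu> j1 j2 (\<Phi> p))"

definition u_vec :: "complex \<Rightarrow> complex \<Rightarrow> complex \<Rightarrow> (int \<times> int \<Rightarrow> complex poly)" where
  "u_vec l1 l2 \<mu> = (\<lambda>(i1, i2).
     if i1 \<ge> 0 \<and> i2 = - i1 then
       monom ((-1) ^ nat i1 * falling \<mu> (nat i1) /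
              (fact (nat i1) * falling (l1 - l2) (nat i1))) (nat i1)
     else 0)"

text \<open>The weights of M_lambda are (l1 - n, l2 + n), n in N, with
one-dimensional weight spaces spanned by E21^n v_lambda, so tr(Phi_0 on M_lambda[nu]) is the
coefficient of E21^n v in Phi_(0,0)(E21^n v).  Since
E = sum_n tr_n z1^(l1-n) z2^(l2+n) = z1^l1 z2^l2 sum_n tr_n (z2/z1)^n, we record E by the
formal power series  sum_n tr_n q^n  in q = z2/z1.\<close>
definition etingof_trace_fps :: "(complex poly \<Rightarrow> (int \<times> int \<Rightarrow> complex poly)) \<Rightarrow> complex fps" where
  "etingof_trace_fps \<Phi> = Abs_fps (\<lambda>n. coeff (\<Phi> (monom 1 n) (0, 0)) n)"

end

theory Submission
  imports Defs
begin

text \<open>The vector \<open>u\<^sub>\<lambda>\<close> is a highest-weight vector of weight \<open>\<lambda>\<close>: the condition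
\<open>E\<^sub>1\<^sub>2 u\<^sub>\<lambda> = 0\<close> is exactly the two-term recurrence of its coefficients.  By the universal
property of the Verma module, the unique homomorphism with \<open>\<Phi> v\<^sub>\<lambda> = u\<^sub>\<lambda>\<close> is
\<open>\<Phi> (E\<^sub>2\<^sub>1\<^sup>n v\<^sub>\<lambda>) = E\<^sub>2\<^sub>1\<^sup>n u\<^sub>\<lambda>\<close>.  On \<open>M~\<close>, \<open>E\<^sub>2\<^sub>1\<close> is the sum of two commuting
operators, the action on \<open>M\<^sub>\<lambda>\<close> and the shift \<open>(i\<^sub>1, i\<^sub>2) \<mapsto> (i\<^sub>1 + 1, i\<^sub>2 - 1)\<close> weighted
by \<open>i\<^sub>1 + 1 + \<mu>\<close>, so a binomial expansion gives the \<open>n\<close>-th trace coefficient as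
\<open>\<Sum>\<^sub>m (n choose m) (1 + \<mu>)\<^sub>m c\<^sub>m\<close>, where \<open>c\<^sub>m\<close> are the coefficients of \<open>u\<^sub>\<lambda>\<close>.
Since \<open>q\<^sup>i / (1 - q)\<^sup>i\<^sup>+\<^sup>1 = \<Sum>\<^sub>n (n choose i) q\<^sup>n\<close>, this is the \<open>n\<close>-th coefficient of
\<open>(1 - q)\<^sup>-\<^sup>1 \<^sub>2F\<^sub>1(\<mu> + 1, -\<mu>; -\<sigma>; -q/(1 - q))\<close>.\<close>

declare One_nat_def [simp del]

lemma smult_sum_right: "smult c (\<Sum>i\<in>A. f i) = (\<Sum>i\<in>A. smult c (f i))"
  by (induction A rule: infinite_finite_induct) (auto simp: smult_add_right)

lemma pCons_0_sum: "pCons 0 (\<Sum>i\<in>A. f i) = (\<Sum>i\<in>A. pCons 0 (f i))"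
  by (induction A rule: infinite_finite_induct) (simp_all, metis add_pCons add_0)

lemma sum_choose_Suc:
  fixes h :: "nat \<Rightarrow> 'a::comm_semiring_1"
  shows "(\<Sum>m\<le>Suc n. of_nat (Suc n choose m) * h m)
       = (\<Sum>m\<le>n. of_nat (n choose m) * h m) + (\<Sum>m\<le>n. of_nat (n choose m) * h (Suc m))"
proof -
  have "(\<Sum>m\<le>Suc n. of_nat (Suc n choose m) * h m)
      = h 0 + (\<Sum>m\<le>n. of_nat (n choose Suc m) * h (Suc m)) + (\<Sum>m\<le>n. of_nat (n choose m) * h (Suc m))"
    by (simp add: sum.atMost_Suc_shift sum.distrib algebra_simps del: sum.atMost_Suc)
  also have "h 0 + (\<Sum>m\<le>n. of_nat (n choose Suc m) * h (Suc m)) = (\<Sum>m\<le>Suc n. of_nat (n choose m) * h m)"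
    by (simp add: sum.atMost_Suc_shift del: sum.atMost_Suc)
  finally show ?thesis
    by (simp add: binomial_eq_0)
qed

lemma falling_Suc: "falling c (Suc n) = falling c n * (c - of_nat n)"
  by (simp add: falling_def)

lemma falling_nonzero:
  assumes "\<sigma> \<notin> \<nat>"
  shows "falling \<sigma> n \<noteq> 0"
  using assms by (induction n) (auto simp: falling_def)

lemma pochhammer_minus_eq_falling: "pochhammer (- x) i = (-1) ^ i * falling x i"
  by (induction i) (simp add: falling_def, simp add: pochhammer_rec' falling_Suc algebra_simps)

lemma fps_mult_compose_nth:
  fixes A F g :: "'a::comm_ring_1 fps"
  assumes "g $ 0 = 0"
  shows "(A * (F oo g)) $ n = (\<Sum>i\<le>n. F $ i * (A * g ^ i) $ n)"
proof -
  have "(F oo g) $ k = (\<Sum>i\<le>n. F $ i * (g ^ i) $ k)" if "k \<le> n" for k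
    unfolding fps_compose_nth atLeast0AtMost
    by (rule sum.mono_neutral_left) (use that startsby_zero_power_prefix[OF assms] in auto)
  then have "(A * (F oo g)) $ n = (\<Sum>k=0..n. \<Sum>i\<le>n. F $ i * (A $ k * (g ^ i) $ (n - k)))"
    unfolding fps_mult_nth by (intro sum.cong refl) (simp add: sum_distrib_left ac_simps)
  also have "\<dots> = (\<Sum>i\<le>n. F $ i * (A * g ^ i) $ n)"
    by (subst sum.swap) (simp only: fps_mult_nth sum_distrib_left)
  finally show ?thesis .
qed

lemma fps_X_power_mult_inverse_one_minus_X_power_nth:
  "(fps_X ^ i * inverse (1 - fps_X) ^ Suc i :: 'a::field_char_0 fps) $ n = of_nat (n choose i)"
proof -
  have "inverse (1 - fps_X) ^ Suc i = (Abs_fps (\<lambda>k. of_nat ((i + k) choose k)) :: 'a fps)"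
    using one_minus_const_fps_X_neg_power'[of "Suc i" "1::'a"] by (simp add: fps_inverse_power del: power_Suc)
  then show ?thesis
    by (auto simp: fps_X_power_mult_nth binomial_eq_0 binomial_symmetric[of i n])
qed

lemma fps_inverse_one_minus_X_mult_power_nth:
  "(inverse (1 - fps_X) * (- (fps_X * inverse (1 - fps_X))) ^ i :: 'a::field_char_0 fps) $ n
     = (-1) ^ i * of_nat (n choose i)"
proof -
  define I where "I = inverse (1 - fps_X :: 'a fps)"
  have "I * (- (fps_X * I)) ^ i = (-1) ^ i * (fps_X ^ i * I ^ Suc i)"
    by (simp only: power_minus[of "fps_X * I"] power_mult_distrib power_Suc mult_ac)
  also have "((-1) ^ i :: 'a fps) = fps_const ((-1) ^ i)"
    by (metis fps_const_neg fps_const_1_eq_1 fps_const_power)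
  finally show ?thesis
    by (simp add: I_def fps_X_power_mult_inverse_one_minus_X_power_nth del: power_Suc)
qed

lemma coeff_diag_op: "coeff (diag_op g p) n = g n * coeff p n"
  by (auto simp: diag_op_def coeff_sum coeff_monom coeff_eq_0 not_le)

lemma coeff_lower_op: "coeff (lower_op g p) n = g (Suc n) * coeff p (Suc n)"
proof -
  have "coeff (lower_op g p) n = (\<Sum>i\<in>{1..degree p}. if i = Suc n then g i * coeff p i else 0)"
    unfolding lower_op_def coeff_sum coeff_monom by (intro sum.cong) auto
  also have "\<dots> = g (Suc n) * coeff p (Suc n)"
    by (auto simp: coeff_eq_0)
  finally show ?thesis .
qed

lemma verma_act_E21: "verma_act l1 l2 2 1 p = pCons 0 p"
  by (simp add: verma_act_def mult_pCons_right)

lemma coeff_Mt_act_E11: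
  "coeff (Mt_act l1 l2 \<mu> 1 1 F (a, b)) n = (l1 - of_nat n + of_int a) * coeff (F (a, b)) n"
  by (simp add: Mt_act_def verma_act_def coeff_diag_op algebra_simps)

lemma coeff_Mt_act_E22:
  "coeff (Mt_act l1 l2 \<mu> 2 2 F (a, b)) n = (l2 + of_nat n + of_int b) * coeff (F (a, b)) n"
  by (simp add: Mt_act_def verma_act_def coeff_diag_op algebra_simps)

lemma Mt_act_E21:
  "Mt_act l1 l2 \<mu> 2 1 F (a, b) = pCons 0 (F (a, b)) + smult (of_int a + 1 + \<mu>) (F (a + 1, b - 1))"
  by (simp add: Mt_act_def verma_act_E21)

lemma coeff_Mt_act_E21:
  "coeff (Mt_act l1 l2 \<mu> 2 1 F (a, b)) n =
     (case n of 0 \<Rightarrow> 0 | Suc m \<Rightarrow> coeff (F (a, b)) m) + (of_int a + 1 + \<mu>) * coeff (F (a + 1, b - 1)) n"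
  by (simp add: Mt_act_E21 coeff_pCons)

lemma coeff_Mt_act_E12:
  "coeff (Mt_act l1 l2 \<mu> 1 2 F (a, b)) n =
     of_nat (Suc n) * (l1 - l2 - of_nat n) * coeff (F (a, b)) (Suc n)
     + (of_int b + 1 + \<mu>) * coeff (F (a - 1, b + 1)) n"
  by (simp add: Mt_act_def verma_act_def coeff_lower_op algebra_simps)

lemma verma_act_add:
  "verma_act l1 l2 j1 j2 (p + q) = verma_act l1 l2 j1 j2 p + verma_act l1 l2 j1 j2 q"
  by (auto simp: verma_act_def poly_eq_iff coeff_diag_op coeff_lower_op coeff_pCons algebra_simps split: nat.split)

lemma verma_act_smult: "verma_act l1 l2 j1 j2 (smult c p) = smult c (verma_act l1 l2 j1 j2 p)"
  by (auto simp: verma_act_def poly_eq_iff coeff_diag_op coeff_lower_op coeff_pCons algebra_simps split: nat.split)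

lemma Mt_act_add:
  "Mt_act l1 l2 \<mu> j1 j2 (\<lambda>k. F k + G k) = (\<lambda>k. Mt_act l1 l2 \<mu> j1 j2 F k + Mt_act l1 l2 \<mu> j1 j2 G k)"
  by (auto simp: Mt_act_def verma_act_add smult_add_right fun_eq_iff algebra_simps)

lemma Mt_act_smult:
  "Mt_act l1 l2 \<mu> j1 j2 (\<lambda>k. smult c (F k)) = (\<lambda>k. smult c (Mt_act l1 l2 \<mu> j1 j2 F k))"
  by (auto simp: Mt_act_def verma_act_smult fun_eq_iff poly_eq_iff algebra_simps)

lemma Mt_act_zero: "Mt_act l1 l2 \<mu> j1 j2 (\<lambda>k. 0) = (\<lambda>k. 0)"
  using Mt_act_smult[of l1 l2 \<mu> j1 j2 0 "\<lambda>k. 0"] by simp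

lemma Mt_act_sum:
  assumes "finite A"
  shows "Mt_act l1 l2 \<mu> j1 j2 (\<lambda>k. \<Sum>i\<in>A. smult (c i) (G i k))
       = (\<lambda>k. \<Sum>i\<in>A. smult (c i) (Mt_act l1 l2 \<mu> j1 j2 (G i) k))"
  using assms
proof (induction A rule: finite_induct)
  case empty
  show ?case by (simp add: Mt_act_zero)
next
  case (insert i A)
  then show ?case
    using Mt_act_add[of l1 l2 \<mu> j1 j2 "\<lambda>k. smult (c i) (G i k)"] Mt_act_smult[of l1 l2 \<mu> j1 j2 "c i" "G i"]
    by simp
qed

lemma Mt_act_E11_E21:
  "Mt_act l1 l2 \<mu> 1 1 (Mt_act l1 l2 \<mu> 2 1 F)
     = (\<lambda>k. Mt_act l1 l2 \<mu> 2 1 (Mt_act l1 l2 \<mu> 1 1 F) k - Mt_act l1 l2 \<mu> 2 1 F k)"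
proof (rule ext, clarify, rule poly_eqI)
  fix a b n
  show "coeff (Mt_act l1 l2 \<mu> 1 1 (Mt_act l1 l2 \<mu> 2 1 F) (a, b)) n =
        coeff (Mt_act l1 l2 \<mu> 2 1 (Mt_act l1 l2 \<mu> 1 1 F) (a, b) - Mt_act l1 l2 \<mu> 2 1 F (a, b)) n"
    by (cases n) (simp_all add: coeff_Mt_act_E11 coeff_Mt_act_E21 algebra_simps)
qed

lemma Mt_act_E22_E21:
  "Mt_act l1 l2 \<mu> 2 2 (Mt_act l1 l2 \<mu> 2 1 F)
     = (\<lambda>k. Mt_act l1 l2 \<mu> 2 1 (Mt_act l1 l2 \<mu> 2 2 F) k + Mt_act l1 l2 \<mu> 2 1 F k)"
proof (rule ext, clarify, rule poly_eqI)
  fix a b n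
  show "coeff (Mt_act l1 l2 \<mu> 2 2 (Mt_act l1 l2 \<mu> 2 1 F) (a, b)) n =
        coeff (Mt_act l1 l2 \<mu> 2 1 (Mt_act l1 l2 \<mu> 2 2 F) (a, b) + Mt_act l1 l2 \<mu> 2 1 F (a, b)) n"
    by (cases n) (simp_all add: coeff_Mt_act_E22 coeff_Mt_act_E21 algebra_simps)
qed

lemma Mt_act_E12_E21:
  "Mt_act l1 l2 \<mu> 1 2 (Mt_act l1 l2 \<mu> 2 1 F)
     = (\<lambda>k. Mt_act l1 l2 \<mu> 2 1 (Mt_act l1 l2 \<mu> 1 2 F) k
          + Mt_act l1 l2 \<mu> 1 1 F k - Mt_act l1 l2 \<mu> 2 2 F k)"
proof (rule ext, clarify, rule poly_eqI)
  fix a b n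
  show "coeff (Mt_act l1 l2 \<mu> 1 2 (Mt_act l1 l2 \<mu> 2 1 F) (a, b)) n =
        coeff (Mt_act l1 l2 \<mu> 2 1 (Mt_act l1 l2 \<mu> 1 2 F) (a, b)
          + Mt_act l1 l2 \<mu> 1 1 F (a, b) - Mt_act l1 l2 \<mu> 2 2 F (a, b)) n"
    by (cases n) (simp_all add: coeff_Mt_act_E11 coeff_Mt_act_E22 coeff_Mt_act_E21
        coeff_Mt_act_E12 algebra_simps)
qed

definition is_highest_weight_vec ::
    "complex \<Rightarrow> complex \<Rightarrow> complex \<Rightarrow> (int \<times> int \<Rightarrow> complex poly) \<Rightarrow> bool" where
  "is_highest_weight_vec l1 l2 \<mu> F \<longleftrightarrow>
     Mt_act l1 l2 \<mu> 1 2 F = (\<lambda>_. 0) \<and>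
     Mt_act l1 l2 \<mu> 1 1 F = (\<lambda>k. smult l1 (F k)) \<and>
     Mt_act l1 l2 \<mu> 2 2 F = (\<lambda>k. smult l2 (F k))"

lemma Mt_act_E11_E21_pow:
  assumes "Mt_act l1 l2 \<mu> 1 1 F = (\<lambda>k. smult l1 (F k))"
  shows "Mt_act l1 l2 \<mu> 1 1 ((Mt_act l1 l2 \<mu> 2 1 ^^ n) F)
       = (\<lambda>k. smult (l1 - of_nat n) ((Mt_act l1 l2 \<mu> 2 1 ^^ n) F k))"
proof (induction n)
  case 0
  show ?case using assms by simp
next
  case (Suc n)
  show ?case
    by (simp add: Mt_act_E11_E21 Suc Mt_act_smult fun_eq_iff poly_eq_iff algebra_simps)
qed

lemma Mt_act_E22_E21_pow:
  assumes "Mt_act l1 l2 \<mu> 2 2 F = (\<lambda>k. smult l2 (F k))"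
  shows "Mt_act l1 l2 \<mu> 2 2 ((Mt_act l1 l2 \<mu> 2 1 ^^ n) F)
       = (\<lambda>k. smult (l2 + of_nat n) ((Mt_act l1 l2 \<mu> 2 1 ^^ n) F k))"
proof (induction n)
  case 0
  show ?case using assms by simp
next
  case (Suc n)
  show ?case
    by (simp add: Mt_act_E22_E21 Suc Mt_act_smult fun_eq_iff poly_eq_iff algebra_simps)
qed

lemma Mt_act_E12_E21_pow:
  assumes "is_highest_weight_vec l1 l2 \<mu> F"
  shows "Mt_act l1 l2 \<mu> 1 2 ((Mt_act l1 l2 \<mu> 2 1 ^^ n) F)
       = (\<lambda>k. smult (of_nat n * (l1 - l2 - of_nat n + 1)) ((Mt_act l1 l2 \<mu> 2 1 ^^ (n - 1)) F k))"
proof (induction n)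
  case 0
  show ?case using assms by (simp add: is_highest_weight_vec_def)
next
  case (Suc n)
  let ?E21 = "Mt_act l1 l2 \<mu> 2 1"
  have E11: "Mt_act l1 l2 \<mu> 1 1 F = (\<lambda>k. smult l1 (F k))"
    and E22: "Mt_act l1 l2 \<mu> 2 2 F = (\<lambda>k. smult l2 (F k))"
    using assms by (simp_all add: is_highest_weight_vec_def)
  \<comment> \<open>the truncated \<open>n - 1\<close> is harmless: for \<open>n = 0\<close> the scalar vanishes\<close>
  have lowered: "?E21 (\<lambda>k. smult (of_nat n * c) ((?E21 ^^ (n - 1)) F k))
      = (\<lambda>k. smult (of_nat n * c) ((?E21 ^^ n) F k))" for c
    by (cases n) (simp_all add: Mt_act_smult Mt_act_zero)
  let ?G = "(?E21 ^^ n) F"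
  have "Mt_act l1 l2 \<mu> 1 2 (?E21 ?G)
      = (\<lambda>k. ?E21 (Mt_act l1 l2 \<mu> 1 2 ?G) k + Mt_act l1 l2 \<mu> 1 1 ?G k - Mt_act l1 l2 \<mu> 2 2 ?G k)"
    by (rule Mt_act_E12_E21)
  also have "?E21 (Mt_act l1 l2 \<mu> 1 2 ?G) = (\<lambda>k. smult (of_nat n * (l1 - l2 - of_nat n + 1)) (?G k))"
    by (simp only: Suc.IH lowered)
  finally show ?case
    by (simp add: Mt_act_E11_E21_pow[OF E11] Mt_act_E22_E21_pow[OF E22] fun_eq_iff poly_eq_iff
        algebra_simps)
qed

definition verma_hom :: "complex \<Rightarrow> complex \<Rightarrow> complex \<Rightarrow> (int \<times> int \<Rightarrow> complex poly)
      \<Rightarrow> complex poly \<Rightarrow> (int \<times> int \<Rightarrow> complex poly)" where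
  "verma_hom l1 l2 \<mu> F p = (\<lambda>k. \<Sum>i\<le>degree p. smult (coeff p i) ((Mt_act l1 l2 \<mu> 2 1 ^^ i) F k))"

lemma verma_hom_eq_sum:
  assumes "degree p \<le> N"
  shows "verma_hom l1 l2 \<mu> F p = (\<lambda>k. \<Sum>i\<le>N. smult (coeff p i) ((Mt_act l1 l2 \<mu> 2 1 ^^ i) F k))"
  unfolding verma_hom_def
  by (rule ext, rule sum.mono_neutral_left) (use assms in \<open>auto simp: coeff_eq_0\<close>)

lemma Mt_act_verma_hom:
  assumes "degree p \<le> N"
  shows "Mt_act l1 l2 \<mu> j1 j2 (verma_hom l1 l2 \<mu> F p)
       = (\<lambda>k. \<Sum>i\<le>N. smult (coeff p i) (Mt_act l1 l2 \<mu> j1 j2 ((Mt_act l1 l2 \<mu> 2 1 ^^ i) F) k))"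
  by (simp add: verma_hom_eq_sum[OF assms] Mt_act_sum)

lemma verma_hom_1: "verma_hom l1 l2 \<mu> F 1 = F"
  by (simp add: verma_hom_def)

lemma degree_verma_act_le:
  assumes "(j1, j2) \<noteq> (2, 1)"
  shows "degree (verma_act l1 l2 j1 j2 p) \<le> degree p"
  using assms by (intro degree_le) (auto simp: verma_act_def coeff_diag_op coeff_lower_op coeff_eq_0)

lemma verma_hom_intertwines:
  assumes "is_highest_weight_vec l1 l2 \<mu> F" and "j1 \<in> {1, 2}" and "j2 \<in> {1, 2}"
  shows "verma_hom l1 l2 \<mu> F (verma_act l1 l2 j1 j2 p) = Mt_act l1 l2 \<mu> j1 j2 (verma_hom l1 l2 \<mu> F p)"
proof -
  let ?N = "degree p" and ?E21 = "Mt_act l1 l2 \<mu> 2 1"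
  have E11: "Mt_act l1 l2 \<mu> 1 1 F = (\<lambda>k. smult l1 (F k))"
    and E22: "Mt_act l1 l2 \<mu> 2 2 F = (\<lambda>k. smult l2 (F k))"
    using assms(1) by (simp_all add: is_highest_weight_vec_def)
  consider "j1 = 1" "j2 = 1" | "j1 = 2" "j2 = 2" | "j1 = 2" "j2 = 1" | "j1 = 1" "j2 = 2"
    using assms(2,3) by auto
  then show ?thesis
  proof cases
    case 1
    then show ?thesis
      using degree_verma_act_le[of 1 1 l1 l2 p]
      by (simp add: verma_hom_eq_sum[of _ ?N] Mt_act_sum Mt_act_E11_E21_pow[OF E11]
          verma_act_def coeff_diag_op mult.commute)
  next
    case 2
    then show ?thesis
      using degree_verma_act_le[of 2 2 l1 l2 p]
      by (simp add: verma_hom_eq_sum[of _ ?N] Mt_act_sum Mt_act_E22_E21_pow[OF E22]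
          verma_act_def coeff_diag_op mult.commute)
  next
    case 3
    have "verma_hom l1 l2 \<mu> F (pCons 0 p)
        = (\<lambda>k. \<Sum>i\<le>Suc ?N. smult (coeff (pCons 0 p) i) ((?E21 ^^ i) F k))"
      by (rule verma_hom_eq_sum) (simp add: degree_pCons_le)
    also have "\<dots> = (\<lambda>k. \<Sum>i\<le>?N. smult (coeff p i) ((?E21 ^^ Suc i) F k))"
      by (simp add: sum.atMost_Suc_shift del: sum.atMost_Suc)
    also have "\<dots> = ?E21 (verma_hom l1 l2 \<mu> F p)"
      by (simp add: Mt_act_verma_hom[of _ ?N])
    finally show ?thesis
      using 3 by (simp add: verma_act_E21)
  next
    case 4
    have "verma_hom l1 l2 \<mu> F (verma_act l1 l2 1 2 p)
        = (\<lambda>k. \<Sum>i\<le>?N. smult (coeff (verma_act l1 l2 1 2 p) i) ((?E21 ^^ i) F k))"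
      by (rule verma_hom_eq_sum) (use degree_verma_act_le[of 1 2 l1 l2 p] in simp)
    also have "\<dots> = (\<lambda>k. \<Sum>i\<le>Suc ?N. smult (coeff p i)
        (smult (of_nat i * (l1 - l2 - of_nat i + 1)) ((?E21 ^^ (i - 1)) F k)))"
      by (simp add: verma_act_def coeff_lower_op sum.atMost_Suc_shift algebra_simps
          del: sum.atMost_Suc)
    also have "\<dots> = Mt_act l1 l2 \<mu> 1 2 (verma_hom l1 l2 \<mu> F p)"
      by (simp add: Mt_act_verma_hom[of _ "Suc ?N"] Mt_act_E12_E21_pow[OF assms(1)])
    finally show ?thesis
      using 4 by simp
  qed
qed

lemma verma_hom_is_gl2_hom:
  assumes "is_highest_weight_vec l1 l2 \<mu> F"
  shows "is_gl2_hom l1 l2 \<mu> (verma_hom l1 l2 \<mu> F)"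
  unfolding is_gl2_hom_def
proof (intro conjI allI ballI)
  fix p q :: "complex poly"
  let ?N = "max (degree p) (degree q)"
  show "verma_hom l1 l2 \<mu> F (p + q) = (\<lambda>k. verma_hom l1 l2 \<mu> F p k + verma_hom l1 l2 \<mu> F q k)"
    by (simp add: verma_hom_eq_sum[of _ ?N] degree_add_le smult_add_left sum.distrib)
next
  fix c and p :: "complex poly"
  show "verma_hom l1 l2 \<mu> F (smult c p) = (\<lambda>k. smult c (verma_hom l1 l2 \<mu> F p k))"
    by (simp add: verma_hom_eq_sum[of _ "degree p"] degree_smult_le smult_sum_right)
qed (use assms verma_hom_intertwines in blast)

lemma gl2_hom_sum:
  assumes "is_gl2_hom l1 l2 \<mu> \<Phi>"
  shows "\<Phi> (\<Sum>i\<le>(N::nat). smult (c i) (f i)) = (\<lambda>k. \<Sum>i\<le>N. smult (c i) (\<Phi> (f i) k))"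
proof (induction N)
  case 0
  show ?case using assms unfolding is_gl2_hom_def by simp
next
  case (Suc N)
  then show ?case using assms unfolding is_gl2_hom_def by simp
qed

lemma gl2_hom_monom:
  assumes "is_gl2_hom l1 l2 \<mu> \<Phi>"
  shows "\<Phi> (monom 1 n) = (Mt_act l1 l2 \<mu> 2 1 ^^ n) (\<Phi> 1)"
proof (induction n)
  case 0
  show ?case by (simp add: one_pCons)
next
  case (Suc n)
  have "monom 1 (Suc n) = verma_act l1 l2 2 1 (monom (1::complex) n)"
    by (simp add: verma_act_E21 monom_Suc)
  then show ?case using Suc assms unfolding is_gl2_hom_def by simp
qed

lemma gl2_hom_eq_verma_hom:
  assumes "is_gl2_hom l1 l2 \<mu> \<Phi>"
  shows "\<Phi> = verma_hom l1 l2 \<mu> (\<Phi> 1)"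
proof
  fix p :: "complex poly"
  have "p = (\<Sum>i\<le>degree p. smult (coeff p i) (monom 1 i))"
    by (simp add: smult_monom poly_as_sum_of_monoms)
  then have "\<Phi> p = \<Phi> (\<Sum>i\<le>degree p. smult (coeff p i) (monom 1 i))"
    by simp
  also have "\<dots> = verma_hom l1 l2 \<mu> (\<Phi> 1) p"
    unfolding gl2_hom_sum[OF assms] gl2_hom_monom[OF assms] verma_hom_def ..
  finally show "\<Phi> p = verma_hom l1 l2 \<mu> (\<Phi> 1) p" .
qed

lemma Mt_act_E21_pow:
  "(Mt_act l1 l2 \<mu> 2 1 ^^ n) F (a, b) = (\<Sum>m\<le>n. of_nat (n choose m) *
      smult (pochhammer (of_int a + 1 + \<mu>) m) (monom 1 (n - m) * F (a + int m, b - int m)))"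
proof (induction n arbitrary: a b)
  case 0
  show ?case by simp
next
  case (Suc n)
  define x where "x = of_int a + 1 + \<mu>"
  define h where "h m = smult (pochhammer x m) (monom 1 (Suc n - m) * F (a + int m, b - int m))" for m
  have shifted: "pCons 0 (of_nat c * smult y (monom 1 (n - m) * p))
      = of_nat c * smult y (monom 1 (Suc n - m) * p)" if "m \<le> n" for c y m p
    using that by (simp add: Suc_diff_le monom_Suc of_nat_poly)
  have "(Mt_act l1 l2 \<mu> 2 1 ^^ Suc n) F (a, b)
      = pCons 0 ((Mt_act l1 l2 \<mu> 2 1 ^^ n) F (a, b)) + smult x ((Mt_act l1 l2 \<mu> 2 1 ^^ n) F (a + 1, b - 1))"
    by (simp add: Mt_act_E21 x_def)
  also have "pCons 0 ((Mt_act l1 l2 \<mu> 2 1 ^^ n) F (a, b)) = (\<Sum>m\<le>n. of_nat (n choose m) * h m)"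
    unfolding Suc.IH pCons_0_sum h_def x_def by (intro sum.cong refl shifted) simp
  also have "smult x ((Mt_act l1 l2 \<mu> 2 1 ^^ n) F (a + 1, b - 1))
      = (\<Sum>m\<le>n. of_nat (n choose m) * h (Suc m))"
  proof -
    have x1: "of_int (a + 1) + 1 + \<mu> = x + 1"
      by (simp add: x_def)
    show ?thesis
      unfolding Suc.IH x1 h_def smult_sum_right
      by (intro sum.cong refl) (simp add: pochhammer_rec algebra_simps)
  qed
  also have "(\<Sum>m\<le>n. of_nat (n choose m) * h m) + (\<Sum>m\<le>n. of_nat (n choose m) * h (Suc m))
      = (\<Sum>m\<le>Suc n. of_nat (Suc n choose m) * h m)"
    by (rule sum_choose_Suc[symmetric])
  finally show ?case
    by (simp only: h_def x_def)
qed

lemma etingof_trace_fps_nth: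
  assumes "is_gl2_hom l1 l2 \<mu> \<Phi>"
  shows "etingof_trace_fps \<Phi> $ n
       = (\<Sum>m\<le>n. of_nat (n choose m) * pochhammer (1 + \<mu>) m * coeff (\<Phi> 1 (int m, - int m)) m)"
proof -
  have "coeff (of_nat c * smult y (monom 1 (n - m) * p)) n = of_nat c * y * coeff p m"
    if "m \<le> n" for c y m and p :: "complex poly"
    using that by (simp add: of_nat_poly coeff_monom_mult)
  then show ?thesis
    unfolding etingof_trace_fps_def fps_nth_Abs_fps gl2_hom_monom[OF assms] Mt_act_E21_pow coeff_sum
    by (intro sum.cong refl) (simp add: add.commute)
qed

definition u_coeff :: "complex \<Rightarrow> complex \<Rightarrow> nat \<Rightarrow> complex" where
  "u_coeff \<mu> \<sigma> i = (-1) ^ i * falling \<mu> i / (fact i * falling \<sigma> i)"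

lemma coeff_u_vec:
  "coeff (u_vec l1 l2 \<mu> (a, b)) n = (if b = - a \<and> a = int n then u_coeff \<mu> (l1 - l2) n else 0)"
  by (auto simp: u_vec_def u_coeff_def coeff_monom)

lemma u_coeff_Suc:
  assumes "\<sigma> \<notin> \<nat>"
  shows "of_nat (Suc n) * (\<sigma> - of_nat n) * u_coeff \<mu> \<sigma> (Suc n) = (of_nat n - \<mu>) * u_coeff \<mu> \<sigma> n"
proof -
  have "of_nat (Suc n) * (\<sigma> - of_nat n) \<noteq> 0"
    using assms by (auto simp del: of_nat_Suc)
  moreover have "u_coeff \<mu> \<sigma> (Suc n) = (of_nat n - \<mu>) / (of_nat (Suc n) * (\<sigma> - of_nat n)) * u_coeff \<mu> \<sigma> n"
    unfolding u_coeff_def falling_Suc fact_Suc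
    by (simp add: divide_inverse inverse_mult_distrib mult_ac del: of_nat_Suc) (simp add: algebra_simps)
  ultimately show ?thesis
    by simp
qed

lemma u_vec_is_highest_weight_vec:
  assumes "l1 - l2 \<notin> \<nat>"
  shows "is_highest_weight_vec l1 l2 \<mu> (u_vec l1 l2 \<mu>)"
  unfolding is_highest_weight_vec_def
proof (intro conjI; rule ext; clarify; rule poly_eqI)
  fix a b n
  show "coeff (Mt_act l1 l2 \<mu> 1 2 (u_vec l1 l2 \<mu>) (a, b)) n = coeff ((\<lambda>_. 0) (a, b)) n"
    using u_coeff_Suc[OF assms, of n \<mu>]
    by (cases "b = - a \<and> a = int n + 1") (auto simp: coeff_Mt_act_E12 coeff_u_vec algebra_simps)
  show "coeff (Mt_act l1 l2 \<mu> 1 1 (u_vec l1 l2 \<mu>) (a, b)) n = coeff (smult l1 (u_vec l1 l2 \<mu> (a, b))) n"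
    by (auto simp: coeff_Mt_act_E11 coeff_u_vec)
  show "coeff (Mt_act l1 l2 \<mu> 2 2 (u_vec l1 l2 \<mu>) (a, b)) n = coeff (smult l2 (u_vec l1 l2 \<mu> (a, b))) n"
    by (auto simp: coeff_Mt_act_E22 coeff_u_vec)
qed

lemma hyp2F1_fps_nth_eq_u_coeff:
  assumes "\<sigma> \<notin> \<nat>"
  shows "hyp2F1_fps (\<mu> + 1) (- \<mu>) (- \<sigma>) $ i = (-1) ^ i * pochhammer (1 + \<mu>) i * u_coeff \<mu> \<sigma> i"
  using falling_nonzero[OF assms, of i]
  by (simp add: hyp2F1_fps_def u_coeff_def pochhammer_minus_eq_falling field_simps
      flip: power_mult_distrib)

lemma etingof_trace_fps_eq_hyp2F1:
  assumes "l1 - l2 \<notin> \<nat>" and "is_gl2_hom l1 l2 \<mu> \<Phi>" and "\<Phi> 1 = u_vec l1 l2 \<mu>"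
  shows "etingof_trace_fps \<Phi> = inverse (1 - fps_X) *
           fps_compose (hyp2F1_fps (\<mu> + 1) (- \<mu>) (l2 - l1)) (- (fps_X * inverse (1 - fps_X)))"
proof (rule fps_ext)
  fix n
  have "etingof_trace_fps \<Phi> $ n
      = (\<Sum>i\<le>n. of_nat (n choose i) * pochhammer (1 + \<mu>) i * u_coeff \<mu> (l1 - l2) i)"
    by (simp add: etingof_trace_fps_nth[OF assms(2)] assms(3) coeff_u_vec)
  also have "\<dots> = (\<Sum>i\<le>n. hyp2F1_fps (\<mu> + 1) (- \<mu>) (l2 - l1) $ i * ((-1) ^ i * of_nat (n choose i)))"
    using hyp2F1_fps_nth_eq_u_coeff[OF assms(1)]
    by (intro sum.cong refl) (simp flip: power_mult_distrib)
  also have "\<dots> = (inverse (1 - fps_X) *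
      fps_compose (hyp2F1_fps (\<mu> + 1) (- \<mu>) (l2 - l1)) (- (fps_X * inverse (1 - fps_X)))) $ n"
    by (simp add: fps_mult_compose_nth fps_inverse_one_minus_X_mult_power_nth)
  finally show "etingof_trace_fps \<Phi> $ n = \<dots>" .
qed

theorem theorem2p1:
  fixes l1 l2 \<mu> :: complex
  assumes "l1 - l2 \<notin> \<nat>"
  shows "Mt_act l1 l2 \<mu> 1 2 (u_vec l1 l2 \<mu>) = (\<lambda>_. 0)
       \<and> Mt_act l1 l2 \<mu> 1 1 (u_vec l1 l2 \<mu>) = (\<lambda>k. smult l1 (u_vec l1 l2 \<mu> k))
       \<and> Mt_act l1 l2 \<mu> 2 2 (u_vec l1 l2 \<mu>) = (\<lambda>k. smult l2 (u_vec l1 l2 \<mu> k))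
       \<and> (\<exists>!\<Phi>. is_gl2_hom l1 l2 \<mu> \<Phi> \<and> \<Phi> 1 = u_vec l1 l2 \<mu>)
       \<and> (\<forall>\<Phi>. is_gl2_hom l1 l2 \<mu> \<Phi> \<and> \<Phi> 1 = u_vec l1 l2 \<mu> \<longrightarrow>
            etingof_trace_fps \<Phi> =
              inverse (1 - fps_X) *
              fps_compose (hyp2F1_fps (\<mu> + 1) (- \<mu>) (l2 - l1))
                          (- (fps_X * inverse (1 - fps_X))))"
proof -
  have u: "is_highest_weight_vec l1 l2 \<mu> (u_vec l1 l2 \<mu>)"
    using assms by (rule u_vec_is_highest_weight_vec)
  have "\<exists>!\<Phi>. is_gl2_hom l1 l2 \<mu> \<Phi> \<and> \<Phi> 1 = u_vec l1 l2 \<mu>"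
  proof
    show "is_gl2_hom l1 l2 \<mu> (verma_hom l1 l2 \<mu> (u_vec l1 l2 \<mu>))
        \<and> verma_hom l1 l2 \<mu> (u_vec l1 l2 \<mu>) 1 = u_vec l1 l2 \<mu>"
      using u by (simp add: verma_hom_is_gl2_hom verma_hom_1)
  qed (metis gl2_hom_eq_verma_hom)
  with u etingof_trace_fps_eq_hyp2F1[OF assms] show ?thesis
    unfolding is_highest_weight_vec_def by blast
qed

end
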